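(* Let $\alpha,\beta\ge-\tfrac12$, let $w_{\alpha\beta}(x)=(1-x)^\alpha(1+x)^\beta$ on $[-1,1]$ and let $\{p_l\}_{l\ge0}$ be the orthonormal Jacobi polynomials for $\langle f,g\rangle=\int_{-1}^1 f\bar g\,w_{\alpha\beta}\,dx$ (positive leading coefficients). Let $0\le m\le n$ be integers and $\mathcal{R}(x)=p_m(x)+\sum_{l=0}^{m-1}e_lp_l(x)$, $e_l\in\mathbb{C}$. Let $\lambda_1=\frac{\beta-\alpha}{2+\alpha+\beta}$ and define $\mathcal{L}_n=\{P\in\mathbb{S}_n:\varepsilon(P)>\lambda_1\}$, $\mathcal{L}_n^m=\{P\in\mathbb{S}_n^m:\varepsilon(P)>\lambda_1\}$, $\mathcal{L}_n^{\mathcal{R}}=\{P\in\mathbb{S}_n^{\mathcal{R}}:\varepsilon(P)>\lambda_1\}$. If these sets are nonempty, then the set of minimizers of $\operatorname{var}_S$ over $\mathcal{L}_n$ equals the set of maximizers of $\varepsilon$ over $\mathcal{L}_n$, which is the set of maximizers $\mathcal{P}_n$ of $\varepsilon$ over $\mathbb{S}_n$; likewise the minimizers of $\operatorname{var}_S$ over $\mathcal{L}^m_n$ equal the maximizers of $\varepsilon$ over $\mathcal{L}^m_n$, namely $\mathcal{P}^m_n$, and the minimizers of $\operatorname{var}_S$ over $\mathcal{L}^{\mathcal{R}}_n$ equal the maximizers of $\varepsilon$ over $\mathcal{L}^{\mathcal{R}}_n$, namely $\mathcal{P}^{\mathcal{R}}_n$. In particular, among all polynomials in $\mathcal{L}_n$,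 $\mathcal{L}_n^m$, $\mathcal{L}_n^{\mathcal{R}}$, the polynomials $\mathcal{P}_n$, $\mathcal{P}_n^m$, $\mathcal{P}_n^{\mathcal{R}}$ respectively minimize the position variance.
   Context: $\varepsilon(f)=\int_{-1}^1x|f(x)|^2w_{\alpha\beta}(x)\,dx$ and $\|f\|^2=\int_{-1}^1|f|^2w_{\alpha\beta}dx$. Position variance: $\operatorname{var}_S(f)=\dfrac{1-\varepsilon(f)^2}{\big(\frac{\alpha-\beta}{\alpha+\beta+2}+\varepsilon(f)\big)^2}$ (defined when the denominator is nonzero). $\Pi_n=\operatorname{span}\{p_0,\dots,p_n\}$, $\Pi^m_n=\operatorname{span}\{p_m,\dots,p_n\}$, $\Pi^{\mathcal{R}}_n=\{c_m\mathcal{R}+\sum_{l=m+1}^nc_lp_l\}$ (complex coefficients), and $\mathbb{S}_n,\mathbb{S}^m_n,\mathbb{S}^{\mathcal{R}}_n$ are their subsets of norm-one elements. $\mathcal{P}_n$, $\mathcal{P}^m_n$, $\mathcal{P}^{\mathcal{R}}_n$ denote the maximizers of $\varepsilon$ over $\mathbb{S}_n$, $\mathbb{S}^m_n$, $\mathbb{S}^{\mathcal{R}}_n$ respectively (each unique up to multiplication by a complex scalar of modulus one). *)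

theory Defs
  imports "HOL-Analysis.Analysis" "HOL-Computational_Algebra.Polynomial"
begin

definition jw :: "real \<Rightarrow> real \<Rightarrow> real \<Rightarrow> real" where
  "jw \<alpha> \<beta> x = (1 - x) powr \<alpha> * (1 + x) powr \<beta>"

text \<open>Weighted L2 inner product of real polynomials (Jacobi polynomials are real).\<close>
definition jinner :: "real \<Rightarrow> real \<Rightarrow> real poly \<Rightarrow> real poly \<Rightarrow> real" where
  "jinner \<alpha> \<beta> f g = integral {-1..1} (\<lambda>x. poly f x * poly g x * jw \<alpha> \<beta> x)"

definition orthonormal_jacobi :: "real \<Rightarrow> real \<Rightarrow> (nat \<Rightarrow> real poly) \<Rightarrow> bool" where
  "orthonormal_jacobi \<alpha> \<beta> p \<longleftrightarrow>
     (\<forall>l. degree (p l) = l \<and> lead_coeff (p l) > 0) \<and>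
     (\<forall>k l. jinner \<alpha> \<beta> (p k) (p l) = (if k = l then 1 else 0))"

definition nrm2 :: "real \<Rightarrow> real \<Rightarrow> (real \<Rightarrow> complex) \<Rightarrow> real" where
  "nrm2 \<alpha> \<beta> f = integral {-1..1} (\<lambda>x. (cmod (f x))\<^sup>2 * jw \<alpha> \<beta> x)"

definition eps :: "real \<Rightarrow> real \<Rightarrow> (real \<Rightarrow> complex) \<Rightarrow> real" where
  "eps \<alpha> \<beta> f = integral {-1..1} (\<lambda>x. x * (cmod (f x))\<^sup>2 * jw \<alpha> \<beta> x)"

definition varS :: "real \<Rightarrow> real \<Rightarrow> (real \<Rightarrow> complex) \<Rightarrow> real" where
  "varS \<alpha> \<beta> f = (1 - (eps \<alpha> \<beta> f)\<^sup>2) / ((\<alpha> - \<beta>) / (\<alpha> + \<beta> + 2) + eps \<alpha> \<beta> f)\<^sup>2"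

definition pc :: "(nat \<Rightarrow> real poly) \<Rightarrow> nat \<Rightarrow> real \<Rightarrow> complex" where
  "pc p l x = complex_of_real (poly (p l) x)"

definition Pi_n :: "(nat \<Rightarrow> real poly) \<Rightarrow> nat \<Rightarrow> (real \<Rightarrow> complex) set" where
  "Pi_n p n = {f. \<exists>c :: nat \<Rightarrow> complex. f = (\<lambda>x. \<Sum>l\<le>n. c l * pc p l x)}"

definition Pi_mn :: "(nat \<Rightarrow> real poly) \<Rightarrow> nat \<Rightarrow> nat \<Rightarrow> (real \<Rightarrow> complex) set" where
  "Pi_mn p m n = {f. \<exists>c :: nat \<Rightarrow> complex. f = (\<lambda>x. \<Sum>l\<in>{m..n}. c l * pc p l x)}"

definition Rpoly :: "(nat \<Rightarrow> real poly) \<Rightarrow> nat \<Rightarrow> (nat \<Rightarrow> complex) \<Rightarrow> real \<Rightarrow> complex" where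
  "Rpoly p m e x = pc p m x + (\<Sum>l<m. e l * pc p l x)"

definition Pi_R :: "(nat \<Rightarrow> real poly) \<Rightarrow> nat \<Rightarrow> (nat \<Rightarrow> complex) \<Rightarrow> nat \<Rightarrow> (real \<Rightarrow> complex) set" where
  "Pi_R p m e n = {f. \<exists>c :: nat \<Rightarrow> complex.
      f = (\<lambda>x. c m * Rpoly p m e x + (\<Sum>l\<in>{m+1..n}. c l * pc p l x))}"

definition unitS :: "real \<Rightarrow> real \<Rightarrow> (real \<Rightarrow> complex) set \<Rightarrow> (real \<Rightarrow> complex) set" where
  "unitS \<alpha> \<beta> A = {f \<in> A. nrm2 \<alpha> \<beta> f = 1}"

definition Lset :: "real \<Rightarrow> real \<Rightarrow> (real \<Rightarrow> complex) set \<Rightarrow> (real \<Rightarrow> complex) set" where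
  "Lset \<alpha> \<beta> S = {f \<in> S. eps \<alpha> \<beta> f > (\<beta> - \<alpha>) / (2 + \<alpha> + \<beta>)}"

definition maximizers :: "('a \<Rightarrow> real) \<Rightarrow> 'a set \<Rightarrow> 'a set" where
  "maximizers F A = {f \<in> A. \<forall>g \<in> A. F g \<le> F f}"

definition minimizers :: "('a \<Rightarrow> real) \<Rightarrow> 'a set \<Rightarrow> 'a set" where
  "minimizers F A = {f \<in> A. \<forall>g \<in> A. F f \<le> F g}"

end

theory Submission
  imports Defs
begin

text \<open>Writing \<open>\<lambda>\<^sub>1 = (\<beta> - \<alpha>)/(2 + \<alpha> + \<beta>)\<close>, the position variance is
  \<open>var\<^sub>S f = (1 - \<epsilon>\<^sup>2)/(\<epsilon> - \<lambda>\<^sub>1)\<^sup>2\<close> with \<open>\<epsilon> = \<epsilon>(f)\<close>, and on normalised functions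
  \<open>\<epsilon> \<le> 1\<close>. Since \<open>-1 < \<lambda>\<^sub>1 < 1\<close>, the map \<open>\<epsilon> \<mapsto> (1 - \<epsilon>\<^sup>2)/(\<epsilon> - \<lambda>\<^sub>1)\<^sup>2\<close> is strictly
  decreasing on \<open>(\<lambda>\<^sub>1, 1]\<close>, so minimising the variance over the functions with
  \<open>\<epsilon> > \<lambda>\<^sub>1\<close> is the same as maximising \<open>\<epsilon>\<close> there; and as soon as some function
  has \<open>\<epsilon> > \<lambda>\<^sub>1\<close>, every maximiser of \<open>\<epsilon>\<close> over the whole sphere does too.
  Nothing about Jacobi polynomials or the particular subspaces is needed.\<close>

lemma minimizers_eq_maximizers_if_strict_antimono:
  fixes F G :: "'a \<Rightarrow> real"
  assumes antimono: "\<And>f g. f \<in> A \<Longrightarrow> g \<in> A \<Longrightarrow> G f < G g \<Longrightarrow> F g < F f"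
    and cong: "\<And>f g. f \<in> A \<Longrightarrow> g \<in> A \<Longrightarrow> G f = G g \<Longrightarrow> F f = F g"
  shows "minimizers F A = maximizers G A"
proof (intro equalityI subsetI)
  fix f assume "f \<in> minimizers F A"
  then have fA: "f \<in> A" and fmin: "\<And>g. g \<in> A \<Longrightarrow> F f \<le> F g"
    by (simp_all add: minimizers_def)
  have "G g \<le> G f" if "g \<in> A" for g
    using antimono[OF fA that] fmin[OF that] by linarith
  with fA show "f \<in> maximizers G A" by (simp add: maximizers_def)
next
  fix f assume "f \<in> maximizers G A"
  then have fA: "f \<in> A" and fmax: "\<And>g. g \<in> A \<Longrightarrow> G g \<le> G f"
    by (simp_all add: maximizers_def)
  have "F f \<le> F g" if "g \<in> A" for g
    using fmax[OF that] antimono[OF that fA] cong[OF that fA] by fastforce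
  with fA show "f \<in> minimizers F A" by (simp add: minimizers_def)
qed

lemma maximizers_superlevel_set:
  fixes G :: "'a \<Rightarrow> real"
  assumes "{f \<in> A. G f > c} \<noteq> {}"
  shows "maximizers G {f \<in> A. G f > c} = maximizers G A"
proof (intro equalityI subsetI)
  fix f assume "f \<in> maximizers G {f \<in> A. G f > c}"
  then have fA: "f \<in> A" "G f > c" and fmax: "\<And>g. g \<in> A \<Longrightarrow> G g > c \<Longrightarrow> G g \<le> G f"
    by (simp_all add: maximizers_def)
  have "G g \<le> G f" if "g \<in> A" for g
    using fmax[OF that] fA(2) by linarith
  with fA show "f \<in> maximizers G A" by (simp add: maximizers_def)
next
  fix f assume "f \<in> maximizers G A"
  then have fA: "f \<in> A" and fmax: "\<And>g. g \<in> A \<Longrightarrow> G g \<le> G f"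
    by (simp_all add: maximizers_def)
  from assms obtain g where "g \<in> A" "G g > c" by auto
  with fmax have "G f > c" by fastforce
  with fA fmax show "f \<in> maximizers G {f \<in> A. G f > c}" by (simp add: maximizers_def)
qed

lemma eps_abs_le_1:
  assumes "nrm2 \<alpha> \<beta> f = 1"
  shows "\<bar>eps \<alpha> \<beta> f\<bar> \<le> 1"
proof -
  let ?h = "\<lambda>x. (cmod (f x))\<^sup>2 * jw \<alpha> \<beta> x"
  have h_int: "(?h has_integral 1) {-1..1}"
    using assms unfolding nrm2_def by (metis has_integral_integral not_integrable_integral zero_neq_one)
  have "(\<lambda>x::real. x) \<in> borel_measurable (lebesgue_on {-1..1})"
    by (intro continuous_imp_measurable_on_sets_lebesgue continuous_on_id) auto
  from borel_measurable_times[OF this integrable_imp_measurable[OF has_integral_integrable[OF h_int]]]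
  have meas: "(\<lambda>x. x * (cmod (f x))\<^sup>2 * jw \<alpha> \<beta> x) \<in> borel_measurable (lebesgue_on {-1..1})"
    by (simp add: mult.assoc)
  have "norm (eps \<alpha> \<beta> f) \<le> 1"
    unfolding eps_def
  proof (rule integral_norm_bound_integral'[OF _ meas _ h_int])
    fix x :: real assume "x \<in> {-1..1}"
    then have "\<bar>x\<bar> \<le> 1" by auto
    moreover have "jw \<alpha> \<beta> x \<ge> 0" unfolding jw_def by simp
    ultimately have "\<bar>x\<bar> * ?h x \<le> ?h x"
      by (intro mult_left_le_one_le) auto
    with \<open>jw \<alpha> \<beta> x \<ge> 0\<close> show "norm (x * (cmod (f x))\<^sup>2 * jw \<alpha> \<beta> x) \<le> ?h x"
      by (simp add: abs_mult mult.assoc)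
  qed simp
  then show ?thesis by simp
qed

lemma varS_eq:
  assumes "\<alpha> + \<beta> + 2 \<noteq> 0"
  shows "varS \<alpha> \<beta> f = (1 - (eps \<alpha> \<beta> f)\<^sup>2) / (eps \<alpha> \<beta> f - (\<beta> - \<alpha>) / (2 + \<alpha> + \<beta>))\<^sup>2"
proof -
  have "(\<alpha> - \<beta>) / (\<alpha> + \<beta> + 2) = - ((\<beta> - \<alpha>) / (2 + \<alpha> + \<beta>))"
    using assms by (simp add: field_simps)
  then show ?thesis unfolding varS_def by simp
qed

lemma jacobi_lambda_bounds:
  fixes \<alpha> \<beta> :: real
  assumes "\<alpha> > -1" "\<beta> > -1"
  shows "-1 < (\<beta> - \<alpha>) / (2 + \<alpha> + \<beta>)" "(\<beta> - \<alpha>) / (2 + \<alpha> + \<beta>) < 1"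
  using assms by (simp_all add: field_simps)

text \<open>With \<open>u = e\<^sub>1 - l\<close>, \<open>v = e\<^sub>2 - l\<close> the cross-multiplied difference factors as
  \<open>(v - u)((1 - l\<^sup>2)(u + v) - 2luv)\<close>, and \<open>2uv \<le> (1 - l)(u + v)\<close> because \<open>u, v \<le> 1 - l\<close>.\<close>
lemma variance_ratio_strict_antimono:
  fixes l e\<^sub>1 e\<^sub>2 :: real
  assumes "-1 < l" "l < 1" "l < e\<^sub>1" "e\<^sub>1 < e\<^sub>2" "e\<^sub>2 \<le> 1"
  shows "(1 - e\<^sub>2\<^sup>2) / (e\<^sub>2 - l)\<^sup>2 < (1 - e\<^sub>1\<^sup>2) / (e\<^sub>1 - l)\<^sup>2"
proof -
  define u v where "u = e\<^sub>1 - l" and "v = e\<^sub>2 - l"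
  have uv: "0 < u" "u < v" "v \<le> 1 - l" using assms by (simp_all add: u_def v_def)
  have factor: "(1 - e\<^sub>1\<^sup>2) * v\<^sup>2 - (1 - e\<^sub>2\<^sup>2) * u\<^sup>2 = (v - u) * ((1 - l\<^sup>2) * (u + v) - 2 * l * u * v)"
    by (simp add: u_def v_def algebra_simps power2_eq_square)
  have uv_le: "2 * u * v \<le> (1 - l) * (u + v)"
  proof -
    have "u * v \<le> u * (1 - l)" "u * v \<le> (1 - l) * v"
      using uv by (simp_all add: mult_left_mono mult_right_mono less_imp_le)
    then show ?thesis by (simp add: algebra_simps)
  qed
  have "2 * l * u * v < (1 - l\<^sup>2) * (u + v)"
  proof (cases "l \<le> 0")
    case True
    then have "2 * l * u * v \<le> 0" using uv by (simp add: mult_nonpos_nonneg)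
    moreover have "0 < (1 - l\<^sup>2) * (u + v)"
      using assms uv by (simp add: abs_square_less_1)
    ultimately show ?thesis by linarith
  next
    case False
    then have "2 * l * u * v \<le> l * ((1 - l) * (u + v))"
      using mult_left_mono[OF uv_le, of l] by (simp add: mult.assoc)
    also have "\<dots> < (1 + l) * ((1 - l) * (u + v))"
      using assms uv by (intro mult_strict_right_mono) auto
    finally show ?thesis by (simp add: power2_eq_square algebra_simps)
  qed
  with uv have "0 < (v - u) * ((1 - l\<^sup>2) * (u + v) - 2 * l * u * v)"
    by (intro mult_pos_pos) auto
  with factor have "(1 - e\<^sub>2\<^sup>2) * u\<^sup>2 < (1 - e\<^sub>1\<^sup>2) * v\<^sup>2"
    by linarith
  then show ?thesis
    using uv by (simp add: u_def v_def field_simps)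
qed

lemma variance_minimizers_on_unit_sphere:
  fixes \<alpha> \<beta> :: real and S :: "(real \<Rightarrow> complex) set"
  assumes "\<alpha> > -1" "\<beta> > -1" and unit: "\<And>f. f \<in> S \<Longrightarrow> nrm2 \<alpha> \<beta> f = 1"
    and nonempty: "Lset \<alpha> \<beta> S \<noteq> {}"
  shows "minimizers (varS \<alpha> \<beta>) (Lset \<alpha> \<beta> S) = maximizers (eps \<alpha> \<beta>) (Lset \<alpha> \<beta> S)"
    and "maximizers (eps \<alpha> \<beta>) (Lset \<alpha> \<beta> S) = maximizers (eps \<alpha> \<beta>) S"
proof -
  define l where "l = (\<beta> - \<alpha>) / (2 + \<alpha> + \<beta>)"
  have L: "Lset \<alpha> \<beta> S = {f \<in> S. eps \<alpha> \<beta> f > l}" unfolding Lset_def l_def ..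
  have V: "varS \<alpha> \<beta> f = (1 - (eps \<alpha> \<beta> f)\<^sup>2) / (eps \<alpha> \<beta> f - l)\<^sup>2" for f
    unfolding l_def using assms by (intro varS_eq) simp
  have l: "-1 < l" "l < 1"
    unfolding l_def using jacobi_lambda_bounds[OF assms(1,2)] by auto
  have strict: "varS \<alpha> \<beta> g < varS \<alpha> \<beta> f"
    if "f \<in> Lset \<alpha> \<beta> S" "g \<in> Lset \<alpha> \<beta> S" "eps \<alpha> \<beta> f < eps \<alpha> \<beta> g" for f g
  proof -
    from that have "g \<in> S" "l < eps \<alpha> \<beta> f" unfolding L by auto
    then have "eps \<alpha> \<beta> g \<le> 1" using eps_abs_le_1[OF unit] by fastforce
    with l \<open>l < eps \<alpha> \<beta> f\<close> \<open>eps \<alpha> \<beta> f < eps \<alpha> \<beta> g\<close> show ?thesis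
      unfolding V by (rule variance_ratio_strict_antimono)
  qed
  have cong: "varS \<alpha> \<beta> f = varS \<alpha> \<beta> g" if "eps \<alpha> \<beta> f = eps \<alpha> \<beta> g" for f g
    unfolding varS_def that ..
  show "minimizers (varS \<alpha> \<beta>) (Lset \<alpha> \<beta> S) = maximizers (eps \<alpha> \<beta>) (Lset \<alpha> \<beta> S)"
    using strict cong by (rule minimizers_eq_maximizers_if_strict_antimono)
  show "maximizers (eps \<alpha> \<beta>) (Lset \<alpha> \<beta> S) = maximizers (eps \<alpha> \<beta>) S"
    using nonempty unfolding L by (rule maximizers_superlevel_set)
qed

theorem theorem4p3:
  fixes \<alpha> \<beta> :: real and p :: "nat \<Rightarrow> real poly" and m n :: nat and e :: "nat \<Rightarrow> complex"
  assumes "\<alpha> \<ge> -1/2" and "\<beta> \<ge> -1/2"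
    and "orthonormal_jacobi \<alpha> \<beta> p"
    and "m \<le> n"
  shows
   "(Lset \<alpha> \<beta> (unitS \<alpha> \<beta> (Pi_n p n)) \<noteq> {} \<longrightarrow>
       minimizers (varS \<alpha> \<beta>) (Lset \<alpha> \<beta> (unitS \<alpha> \<beta> (Pi_n p n)))
         = maximizers (eps \<alpha> \<beta>) (Lset \<alpha> \<beta> (unitS \<alpha> \<beta> (Pi_n p n))) \<and>
       maximizers (eps \<alpha> \<beta>) (Lset \<alpha> \<beta> (unitS \<alpha> \<beta> (Pi_n p n)))
         = maximizers (eps \<alpha> \<beta>) (unitS \<alpha> \<beta> (Pi_n p n))) \<and>
    (Lset \<alpha> \<beta> (unitS \<alpha> \<beta> (Pi_mn p m n)) \<noteq> {} \<longrightarrow>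
       minimizers (varS \<alpha> \<beta>) (Lset \<alpha> \<beta> (unitS \<alpha> \<beta> (Pi_mn p m n)))
         = maximizers (eps \<alpha> \<beta>) (Lset \<alpha> \<beta> (unitS \<alpha> \<beta> (Pi_mn p m n))) \<and>
       maximizers (eps \<alpha> \<beta>) (Lset \<alpha> \<beta> (unitS \<alpha> \<beta> (Pi_mn p m n)))
         = maximizers (eps \<alpha> \<beta>) (unitS \<alpha> \<beta> (Pi_mn p m n))) \<and>
    (Lset \<alpha> \<beta> (unitS \<alpha> \<beta> (Pi_R p m e n)) \<noteq> {} \<longrightarrow>
       minimizers (varS \<alpha> \<beta>) (Lset \<alpha> \<beta> (unitS \<alpha> \<beta> (Pi_R p m e n)))
         = maximizers (eps \<alpha> \<beta>) (Lset \<alpha> \<beta> (unitS \<alpha> \<beta> (Pi_R p m e n))) \<and>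
       maximizers (eps \<alpha> \<beta>) (Lset \<alpha> \<beta> (unitS \<alpha> \<beta> (Pi_R p m e n)))
         = maximizers (eps \<alpha> \<beta>) (unitS \<alpha> \<beta> (Pi_R p m e n)))"
proof -
  have "\<alpha> > -1" "\<beta> > -1" using assms(1,2) by simp_all
  have unit: "\<And>f. f \<in> unitS \<alpha> \<beta> A \<Longrightarrow> nrm2 \<alpha> \<beta> f = 1" for A
    unfolding unitS_def by simp
  have sphere: "Lset \<alpha> \<beta> (unitS \<alpha> \<beta> A) \<noteq> {} \<longrightarrow>
      minimizers (varS \<alpha> \<beta>) (Lset \<alpha> \<beta> (unitS \<alpha> \<beta> A))
        = maximizers (eps \<alpha> \<beta>) (Lset \<alpha> \<beta> (unitS \<alpha> \<beta> A)) \<and>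
      maximizers (eps \<alpha> \<beta>) (Lset \<alpha> \<beta> (unitS \<alpha> \<beta> A))
        = maximizers (eps \<alpha> \<beta>) (unitS \<alpha> \<beta> A)" for A
    using variance_minimizers_on_unit_sphere[OF \<open>\<alpha> > -1\<close> \<open>\<beta> > -1\<close> unit] by simp
  show ?thesis
    by (intro conjI sphere)
qed

end
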